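(* Let $\alpha:M_s\to M_s$ be completely positive with $\alpha(I)\le I$. Suppose: (i) there is no projection $p$ with $0<p<I$ and $\alpha(p)\ge p$; (ii) there exists $n\ge0$ with $\alpha^{n+1}(I)=\alpha^n(I)=:v$; (iii) $v$ is positive definite (has full support). Then $\alpha(I)=I$.
   Context: $M_s$ is the algebra of complex $s\times s$ matrices with the positive semidefinite order; $\alpha^0=\mathrm{id}$. *)

theory Defs
  imports "Jordan_Normal_Form.Matrix"
begin

definition cadj :: "complex mat \<Rightarrow> complex mat" where
  "cadj A = mat (dim_col A) (dim_row A) (\<lambda>(i,j). cnj (A $$ (j,i)))"

definition qform :: "complex mat \<Rightarrow> complex vec \<Rightarrow> complex" where
  "qform A x = (\<Sum>i<dim_vec x. cnj (x $ i) * (mult_mat_vec A x $ i))"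

definition psd :: "nat \<Rightarrow> complex mat \<Rightarrow> bool" where
  "psd n A \<longleftrightarrow> A \<in> carrier_mat n n \<and>
     (\<forall>x \<in> carrier_vec n. qform A x \<in> \<real> \<and> 0 \<le> Re (qform A x))"

definition pd :: "nat \<Rightarrow> complex mat \<Rightarrow> bool" where
  "pd n A \<longleftrightarrow> A \<in> carrier_mat n n \<and>
     (\<forall>x \<in> carrier_vec n. x \<noteq> 0\<^sub>v n \<longrightarrow> qform A x \<in> \<real> \<and> 0 < Re (qform A x))"

definition mat_le :: "nat \<Rightarrow> complex mat \<Rightarrow> complex mat \<Rightarrow> bool" where
  "mat_le n A B \<longleftrightarrow> A \<in> carrier_mat n n \<and> B \<in> carrier_mat n n \<and> psd n (B - A)"

definition is_projection :: "nat \<Rightarrow> complex mat \<Rightarrow> bool" where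
  "is_projection n p \<longleftrightarrow> p \<in> carrier_mat n n \<and> p * p = p \<and> cadj p = p"

definition lin_map :: "nat \<Rightarrow> (complex mat \<Rightarrow> complex mat) \<Rightarrow> bool" where
  "lin_map s f \<longleftrightarrow>
     (\<forall>A \<in> carrier_mat s s. f A \<in> carrier_mat s s) \<and>
     (\<forall>A \<in> carrier_mat s s. \<forall>B \<in> carrier_mat s s. f (A + B) = f A + f B) \<and>
     (\<forall>A \<in> carrier_mat s s. \<forall>c. f (c \<cdot>\<^sub>m A) = c \<cdot>\<^sub>m f A)"

text \<open>For X in M_k(M_s), identified with M_{k*s}: the (i,j) block of X.\<close>
definition blk :: "nat \<Rightarrow> complex mat \<Rightarrow> nat \<Rightarrow> nat \<Rightarrow> complex mat" where
  "blk s X i j = mat s s (\<lambda>(a,b). X $$ (i*s + a, j*s + b))"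

definition ampl :: "nat \<Rightarrow> nat \<Rightarrow> (complex mat \<Rightarrow> complex mat) \<Rightarrow> complex mat \<Rightarrow> complex mat" where
  "ampl s k f X = mat (k*s) (k*s)
     (\<lambda>(p,q). f (blk s X (p div s) (q div s)) $$ (p mod s, q mod s))"

definition completely_positive :: "nat \<Rightarrow> (complex mat \<Rightarrow> complex mat) \<Rightarrow> bool" where
  "completely_positive s f \<longleftrightarrow> lin_map s f \<and>
     (\<forall>k. \<forall>X. psd (k*s) X \<longrightarrow> psd (k*s) (ampl s k f X))"

end

theory Submission
  imports Defs "Jordan_Normal_Form.Spectral_Radius"
begin

text \<open>
  Let \<open>v = \<alpha>\<^sup>n(I)\<close>; it is a positive definite fixed point of \<open>\<alpha>\<close>. Diagonalize \<open>v\<close> and let \<open>q\<close>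
  be the spectral projection onto the eigenspace of its largest eigenvalue \<open>\<mu> > 0\<close>, so that
  \<open>v = \<mu>\<close> on the range of \<open>q\<close> and \<open>\<mu>I - v \<ge> c(I - q)\<close> for some \<open>c > 0\<close>. For \<open>x\<close> in the range
  of \<open>q\<close>, positivity of \<open>\<alpha>(\<mu>I - v)\<close> and \<open>\<alpha>(\<mu>I - v - c(I - q))\<close> together with \<open>\<alpha>(I) \<le> I\<close> force
  \<open>\<alpha>(I)x = x\<close> and \<open>\<alpha>(I - q)x = 0\<close>, hence \<open>\<alpha>(q)x = x\<close>; since \<open>\<alpha>(q) \<ge> 0\<close> this gives
  \<open>q \<le> \<alpha>(q)\<close>. Hypothesis (i) then forces \<open>q = I\<close>, i.e. \<open>v = \<mu>I\<close>, and \<open>\<alpha>(v) = v\<close> yields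
  \<open>\<alpha>(I) = I\<close>. Of complete positivity only positivity (the case \<open>k = 1\<close>) is used.
\<close>

declare minus_carrier_mat [simp]

section \<open>Matrix preliminaries, adjoints and quadratic forms\<close>

lemma minus_vec_eq_zero_iff:
  "(x :: 'a :: group_add vec) \<in> carrier_vec n \<Longrightarrow> y \<in> carrier_vec n \<Longrightarrow> x - y = 0\<^sub>v n \<longleftrightarrow> x = y"
  by (auto simp: vec_eq_iff)

lemma minus_zero_mat [simp]: "(A :: 'a :: group_add mat) \<in> carrier_mat n m \<Longrightarrow> A - 0\<^sub>m n m = A"
  by (intro eq_matI) auto

lemma smult_mult_mat_vec:
  "A \<in> carrier_mat n m \<Longrightarrow> x \<in> carrier_vec m \<Longrightarrow> (c \<cdot>\<^sub>m A) *\<^sub>v x = c \<cdot>\<^sub>v (A *\<^sub>v x)"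
  by (intro eq_vecI) (auto simp: scalar_prod_def sum_distrib_left algebra_simps)

lemma smult_mat_cancel:
  fixes A B :: "'a :: field mat"
  assumes c: "c \<noteq> 0" and eq: "c \<cdot>\<^sub>m A = c \<cdot>\<^sub>m B"
  shows "A = B"
proof -
  have "A = inverse c \<cdot>\<^sub>m (c \<cdot>\<^sub>m A)" using c by (intro eq_matI) auto
  also have "\<dots> = B" unfolding eq using c by (intro eq_matI) auto
  finally show ?thesis .
qed

lemma nonneg_eq_neg_scaled_imp_zero:
  fixes a b :: complex
  assumes a: "0 \<le> a" and b: "0 \<le> b" and eq: "a = - (complex_of_real r * b)" and r: "0 < r"
  shows "b = 0"
proof -
  have rb: "0 \<le> complex_of_real r * b" using r b by (simp add: less_eq_complex_def)
  have "a + complex_of_real r * b = 0" using eq by simp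
  then have "complex_of_real r * b = 0" using add_nonneg_eq_0_iff[OF a rb] by simp
  then show ?thesis using r by simp
qed

lemma cadj_carrier: "A \<in> carrier_mat n m \<Longrightarrow> cadj A \<in> carrier_mat m n"
  by (simp add: cadj_def)

lemma cadj_dim [simp]: "dim_row (cadj A) = dim_col A" "dim_col (cadj A) = dim_row A"
  by (simp_all add: cadj_def)

lemma cadj_index [simp]:
  "i < dim_col A \<Longrightarrow> j < dim_row A \<Longrightarrow> cadj A $$ (i, j) = cnj (A $$ (j, i))"
  by (simp add: cadj_def)

lemma cadj_mult:
  "A \<in> carrier_mat n k \<Longrightarrow> B \<in> carrier_mat k m \<Longrightarrow> cadj (A * B) = cadj B * cadj A"
  by (intro eq_matI) (auto simp: scalar_prod_def mult.commute intro!: sum.cong)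

lemma cadj_cadj [simp]: "cadj (cadj A) = A"
  by (intro eq_matI) auto

lemma cadj_congruence:
  assumes B: "B \<in> carrier_mat n m" and A: "A \<in> carrier_mat m m"
  shows "cadj (B * A * cadj B) = B * cadj A * cadj B"
  using cadj_mult[OF mult_carrier_mat[OF B A] cadj_carrier[OF B]] cadj_mult[OF B A]
    assoc_mult_mat[OF B cadj_carrier[OF A] cadj_carrier[OF B]] by simp

lemma cadj_minus:
  "A \<in> carrier_mat n m \<Longrightarrow> B \<in> carrier_mat n m \<Longrightarrow> cadj (A - B) = cadj A - cadj B"
  by (intro eq_matI) auto

lemma cadj_one [simp]: "cadj (1\<^sub>m n) = 1\<^sub>m n"
  by (intro eq_matI) auto

lemma cadj_zero [simp]: "cadj (0\<^sub>m n m) = 0\<^sub>m m n"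
  by (intro eq_matI) auto

lemma cadj_mat_diag_real [simp]:
  "cadj (mat_diag n (\<lambda>i. complex_of_real (f i))) = mat_diag n (\<lambda>i. complex_of_real (f i))"
  by (intro eq_matI) (auto simp: mat_diag_def)

lemma cadj_four_block_mat:
  assumes "A \<in> carrier_mat n1 m1" "B \<in> carrier_mat n1 m2" "C \<in> carrier_mat n2 m1" "D \<in> carrier_mat n2 m2"
  shows "cadj (four_block_mat A B C D) = four_block_mat (cadj A) (cadj C) (cadj B) (cadj D)"
  using assms by (intro eq_matI) auto

lemma cscalar_prod_adjoint:
  assumes "A \<in> carrier_mat n m" "x \<in> carrier_vec m" "y \<in> carrier_vec n"
  shows "(A *\<^sub>v x) \<bullet>c y = x \<bullet>c (cadj A *\<^sub>v y)"
proof -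
  have "(A *\<^sub>v x) \<bullet>c y = (\<Sum>i<n. \<Sum>k<m. A $$ (i, k) * x $ k * cnj (y $ i))"
    using assms by (simp add: scalar_prod_def sum_distrib_right lessThan_atLeast0 mult.assoc)
  also have "\<dots> = (\<Sum>k<m. \<Sum>i<n. A $$ (i, k) * x $ k * cnj (y $ i))"
    by (rule sum.swap)
  also have "\<dots> = x \<bullet>c (cadj A *\<^sub>v y)"
    using assms by (simp add: scalar_prod_def sum_distrib_left lessThan_atLeast0 algebra_simps)
  finally show ?thesis .
qed

lemma cscalar_prod_unit_vec [simp]:
  "(x :: complex vec) \<in> carrier_vec n \<Longrightarrow> i < n \<Longrightarrow> x \<bullet>c unit_vec n i = x $ i"
  by (simp add: scalar_prod_def unit_vec_def lessThan_atLeast0 if_distrib cong: if_cong)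

lemma cscalar_prod_mult_unit_vec:
  assumes A: "(A :: complex mat) \<in> carrier_mat n m" and k: "k < n" and l: "l < m"
  shows "(A *\<^sub>v unit_vec m l) \<bullet>c unit_vec n k = A $$ (k, l)"
proof -
  have "(A *\<^sub>v unit_vec m l) \<bullet>c unit_vec n k = (A *\<^sub>v unit_vec m l) $ k"
    by (rule cscalar_prod_unit_vec[OF mult_mat_vec_carrier[OF A unit_vec_carrier] k])
  also have "\<dots> = row A k \<bullet> unit_vec m l" using A k by (simp only: index_mult_mat_vec carrier_matD)
  also have "\<dots> = A $$ (k, l)" using A k l by (simp only: scalar_prod_right_unit index_row carrier_matD)
  finally show ?thesis .
qed

lemma qform_cscalar_prod: "qform A x = (A *\<^sub>v x) \<bullet>c x"
  by (simp add: qform_def scalar_prod_def mult.commute lessThan_atLeast0)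

lemma qform_minus_mat:
  "A \<in> carrier_mat n n \<Longrightarrow> B \<in> carrier_mat n n \<Longrightarrow> x \<in> carrier_vec n \<Longrightarrow>
   qform (A - B) x = qform A x - qform B x"
  by (simp add: qform_cscalar_prod minus_mult_distrib_mat_vec minus_scalar_prod_distrib[of _ n])

lemma qform_smult_mat:
  "A \<in> carrier_mat n n \<Longrightarrow> x \<in> carrier_vec n \<Longrightarrow> qform (c \<cdot>\<^sub>m A) x = c * qform A x"
  by (simp add: qform_cscalar_prod smult_mult_mat_vec)

lemma qform_add_vec:
  assumes "A \<in> carrier_mat n n" "x \<in> carrier_vec n" "y \<in> carrier_vec n"
  shows "qform A (x + y) = qform A x + qform A y + (A *\<^sub>v x) \<bullet>c y + (A *\<^sub>v y) \<bullet>c x"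
  using assms
  by (simp add: qform_cscalar_prod mult_add_distrib_mat_vec conjugate_add_vec
      add_scalar_prod_distrib[of _ n] scalar_prod_add_distrib[of _ n])

lemma qform_smult_vec:
  "A \<in> carrier_mat n n \<Longrightarrow> x \<in> carrier_vec n \<Longrightarrow> qform A (t \<cdot>\<^sub>v x) = t * cnj t * qform A x"
  by (simp add: qform_cscalar_prod mult_mat_vec conjugate_smult_vec)

section \<open>Positive semidefinite matrices and projections\<close>

lemma hermitian_if_qform_real:
  assumes A: "A \<in> carrier_mat n n" and real: "\<And>x. x \<in> carrier_vec n \<Longrightarrow> qform A x \<in> \<real>"
  shows "cadj A = A"
proof -
  have polar: "(A *\<^sub>v x) \<bullet>c y = cnj ((A *\<^sub>v y) \<bullet>c x)"
    if x: "x \<in> carrier_vec n" and y: "y \<in> carrier_vec n" for x y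
  proof -
    let ?a = "(A *\<^sub>v x) \<bullet>c y" and ?b = "(A *\<^sub>v y) \<bullet>c x"
    have iy: "\<i> \<cdot>\<^sub>v y \<in> carrier_vec n" using y by simp
    have "?a + ?b = qform A (x + y) - qform A x - qform A y"
      using qform_add_vec[OF A x y] by simp
    then have re: "?a + ?b \<in> \<real>" using real x y by simp
    have left: "(A *\<^sub>v x) \<bullet>c (\<i> \<cdot>\<^sub>v y) = - \<i> * ?a"
      using A x y by (simp add: conjugate_smult_vec)
    have right: "(A *\<^sub>v (\<i> \<cdot>\<^sub>v y)) \<bullet>c x = \<i> * ?b"
      using A x y by (simp add: mult_mat_vec)
    have diag: "qform A (\<i> \<cdot>\<^sub>v y) = qform A y"
      using qform_smult_vec[OF A y, of \<i>] by simp
    have "\<i> * (?b - ?a) = qform A (x + \<i> \<cdot>\<^sub>v y) - qform A x - qform A y"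
      using qform_add_vec[OF A x iy] left right diag by (simp add: right_diff_distrib)
    then have im: "\<i> * (?b - ?a) \<in> \<real>" using real x iy y by simp
    show ?thesis using re im by (simp add: complex_is_Real_iff complex_eq_iff)
  qed
  show ?thesis
  proof (rule eq_matI)
    fix i j assume "i < dim_row A" "j < dim_col A"
    then have i: "i < n" and j: "j < n" using A by auto
    have "A $$ (i, j) = cnj (A $$ (j, i))"
      using polar[OF unit_vec_carrier unit_vec_carrier, of j i]
      unfolding cscalar_prod_mult_unit_vec[OF A i j] cscalar_prod_mult_unit_vec[OF A j i] .
    then show "cadj A $$ (i, j) = A $$ (i, j)" using A i j by simp
  qed (use A in auto)
qed

lemma psd_iff_qform_nonneg:
  "psd n A \<longleftrightarrow> A \<in> carrier_mat n n \<and> (\<forall>x \<in> carrier_vec n. 0 \<le> qform A x)"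
  by (auto simp: psd_def less_eq_complex_def complex_is_Real_iff)

lemma psd_hermitian: "psd n A \<Longrightarrow> cadj A = A"
  by (rule hermitian_if_qform_real[of _ n]) (auto simp: psd_def)

lemma pd_imp_psd:
  assumes pd: "pd n A"
  shows "psd n A"
proof -
  have "qform A x \<in> \<real> \<and> 0 \<le> Re (qform A x)" if x: "x \<in> carrier_vec n" for x
  proof (cases "x = 0\<^sub>v n")
    case True
    then show ?thesis by (simp add: qform_def)
  next
    case False
    then show ?thesis using pd x by (auto simp: pd_def less_imp_le)
  qed
  then show ?thesis using pd by (simp add: psd_def pd_def)
qed

lemma psd_smult:
  assumes "psd n A" and "0 \<le> c"
  shows "psd n (complex_of_real c \<cdot>\<^sub>m A)"
  using assms by (auto simp: psd_iff_qform_nonneg qform_smult_mat less_eq_complex_def)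

lemma psd_if_psd_diff:
  assumes diff: "psd n (A - B)" and B: "psd n B" and A: "A \<in> carrier_mat n n"
  shows "psd n A"
proof -
  have Bc: "B \<in> carrier_mat n n" using B by (simp add: psd_def)
  have "qform A x = qform (A - B) x + qform B x" if "x \<in> carrier_vec n" for x
    using qform_minus_mat[OF A Bc that] by simp
  then show ?thesis using diff B A by (simp add: psd_iff_qform_nonneg)
qed

lemma quadratic_nonneg_imp_linear_coeff_zero:
  fixes b c :: real
  assumes nonneg: "\<And>r. 0 \<le> r * b + r\<^sup>2 * c"
  shows "b = 0"
proof -
  define K where "K = \<bar>c\<bar> + 1"
  have K: "0 < K" "c < K" by (auto simp: K_def)
  have "0 \<le> ((- b / K) * b + (- b / K)\<^sup>2 * c) * K\<^sup>2"
    using nonneg[of "- b / K"] by simp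
  also have "\<dots> = b\<^sup>2 * (c - K)"
    using K by (simp add: field_simps power2_eq_square)
  finally show ?thesis using K by (simp add: mult_le_0_iff zero_le_mult_iff)
qed

lemma psd_qform_zero_imp_kernel:
  assumes A: "psd n A" and x: "x \<in> carrier_vec n" and zero: "qform A x = 0"
  shows "A *\<^sub>v x = 0\<^sub>v n"
proof -
  have Ac: "A \<in> carrier_mat n n" using A by (simp add: psd_def)
  define y where "y = A *\<^sub>v x"
  have y: "y \<in> carrier_vec n" using Ac x by (simp add: y_def)
  have cross: "(A *\<^sub>v y) \<bullet>c x = y \<bullet>c y"
    using cscalar_prod_adjoint[OF Ac y x] psd_hermitian[OF A] by (simp add: y_def)
  have "0 \<le> Re (qform A (x + complex_of_real r \<cdot>\<^sub>v y))" for r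
    using A x y by (simp add: psd_iff_qform_nonneg less_eq_complex_def)
  also have "Re (qform A (x + complex_of_real r \<cdot>\<^sub>v y)) = r * (2 * Re (y \<bullet>c y)) + r\<^sup>2 * Re (qform A y)"
    for r using qform_add_vec[OF Ac x, of "complex_of_real r \<cdot>\<^sub>v y"] qform_smult_vec[OF Ac y] cross
      zero x y Ac by (simp add: mult_mat_vec conjugate_smult_vec y_def[symmetric] power2_eq_square)
  finally have "Re (y \<bullet>c y) = 0"
    using quadratic_nonneg_imp_linear_coeff_zero[of "2 * Re (y \<bullet>c y)"] by auto
  moreover have "Im (y \<bullet>c y) = 0"
    using conjugate_square_ge_0_vec[of y] by (simp add: less_eq_complex_def)
  ultimately have "y \<bullet>c y = 0" by (simp add: complex_eq_iff)
  then show ?thesis using conjugate_square_eq_0_vec[OF y] by (simp add: y_def)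
qed

lemma psd_congruence:
  assumes X: "psd n X" and B: "B \<in> carrier_mat n n"
  shows "psd n (B * X * cadj B)"
proof -
  have Xc: "X \<in> carrier_mat n n" using X by (simp add: psd_def)
  have "qform (B * X * cadj B) x = qform X (cadj B *\<^sub>v x)" if x: "x \<in> carrier_vec n" for x
  proof -
    define y where "y = cadj B *\<^sub>v x"
    have y: "y \<in> carrier_vec n" using mult_mat_vec_carrier[OF cadj_carrier[OF B] x] by (simp add: y_def)
    have Xy: "X *\<^sub>v y \<in> carrier_vec n" using Xc y by simp
    have "(B * X * cadj B) *\<^sub>v x = B *\<^sub>v (X *\<^sub>v y)"
      using assoc_mult_mat_vec[OF mult_carrier_mat[OF B Xc] cadj_carrier[OF B] x]
        assoc_mult_mat_vec[OF B Xc y] by (simp add: y_def)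
    then show ?thesis
      using cscalar_prod_adjoint[OF B Xy x] by (simp add: qform_cscalar_prod y_def)
  qed
  moreover have "B * X * cadj B \<in> carrier_mat n n"
    using mult_carrier_mat[OF mult_carrier_mat[OF B Xc] cadj_carrier[OF B]] .
  ultimately show ?thesis
    using X mult_mat_vec_carrier[OF cadj_carrier[OF B]] by (simp add: psd_iff_qform_nonneg)
qed

lemma mat_diag_mult_vec:
  assumes y: "y \<in> carrier_vec n"
  shows "mat_diag n f *\<^sub>v y = vec n (\<lambda>i. f i * y $ i)"
proof (rule eq_vecI)
  fix i assume "i < dim_vec (vec n (\<lambda>i. f i * y $ i))"
  then have i: "i < n" by simp
  have "(mat_diag n f *\<^sub>v y) $ i = (\<Sum>k\<in>{0..<n}. (if i = k then f k else 0) * y $ k)"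
    using i y by (simp add: mat_diag_def scalar_prod_def)
  also have "\<dots> = (\<Sum>k\<in>{0..<n}. if k = i then f i * y $ i else 0)"
    by (rule sum.cong) auto
  finally show "(mat_diag n f *\<^sub>v y) $ i = vec n (\<lambda>i. f i * y $ i) $ i" using i by simp
qed (simp add: mat_diag_def)

lemma psd_mat_diag_real:
  assumes "\<And>i. i < n \<Longrightarrow> 0 \<le> f i"
  shows "psd n (mat_diag n (\<lambda>i. complex_of_real (f i)))"
proof -
  have "0 \<le> qform (mat_diag n (\<lambda>i. complex_of_real (f i))) y" if y: "y \<in> carrier_vec n" for y
  proof -
    have "qform (mat_diag n (\<lambda>i. complex_of_real (f i))) y
        = (\<Sum>i<n. complex_of_real (f i) * (y $ i * cnj (y $ i)))"
      using y by (simp add: qform_def mat_diag_mult_vec algebra_simps)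
    also have "0 \<le> \<dots>"
    proof (rule sum_nonneg)
      fix i assume "i \<in> {..<n}"
      then have "0 \<le> complex_of_real (f i)" using assms by (simp add: less_eq_complex_def)
      moreover have "0 \<le> y $ i * cnj (y $ i)" using conjugate_square_positive[of "y $ i"] by simp
      ultimately show "0 \<le> complex_of_real (f i) * (y $ i * cnj (y $ i))" by (rule mult_nonneg_nonneg)
    qed
    finally show ?thesis .
  qed
  then show ?thesis by (simp add: psd_iff_qform_nonneg)
qed

lemma projection_psd:
  assumes q: "is_projection n q"
  shows "psd n q"
proof -
  have qc: "q \<in> carrier_mat n n" and qq: "q * q = q" and hq: "cadj q = q"
    using q by (auto simp: is_projection_def)
  have "qform q x = (q *\<^sub>v x) \<bullet>c (q *\<^sub>v x)" if x: "x \<in> carrier_vec n" for x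
  proof -
    have qx: "q *\<^sub>v x \<in> carrier_vec n" using qc x by simp
    have "q *\<^sub>v (q *\<^sub>v x) = q *\<^sub>v x"
      using assoc_mult_mat_vec[OF qc qc x] unfolding qq by (rule sym)
    then show ?thesis using cscalar_prod_adjoint[OF qc qx x] by (simp add: qform_cscalar_prod hq)
  qed
  then show ?thesis using qc by (simp add: psd_iff_qform_nonneg conjugate_square_ge_0_vec)
qed

lemma projection_complement:
  assumes q: "is_projection n q"
  shows "is_projection n (1\<^sub>m n - q)"
proof -
  have qc: "q \<in> carrier_mat n n" and qq: "q * q = q" and hq: "cadj q = q"
    using q by (auto simp: is_projection_def)
  have oq: "1\<^sub>m n - q \<in> carrier_mat n n" using qc by simp
  have "(1\<^sub>m n - q) * (1\<^sub>m n - q) = 1\<^sub>m n * (1\<^sub>m n - q) - q * (1\<^sub>m n - q)"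
    by (rule minus_mult_distrib_mat[OF one_carrier_mat qc oq])
  also have "q * (1\<^sub>m n - q) = q * 1\<^sub>m n - q * q"
    by (rule mult_minus_distrib_mat[OF qc one_carrier_mat qc])
  also have "\<dots> = 0\<^sub>m n n" using qc by (simp add: qq)
  finally have "(1\<^sub>m n - q) * (1\<^sub>m n - q) = 1\<^sub>m n - q" using qc by simp
  then show ?thesis using qc by (simp add: is_projection_def cadj_minus[of _ n n] hq)
qed

lemma projection_between_zero_one:
  assumes q: "is_projection n q"
  shows "mat_le n (0\<^sub>m n n) q" "mat_le n q (1\<^sub>m n)"
  using projection_psd[OF q] projection_psd[OF projection_complement[OF q]] q
  by (auto simp: mat_le_def is_projection_def)

lemma projection_le_if_fixes_range:
  assumes q: "is_projection n q" and B: "psd n B"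
    and fixed: "\<And>x. x \<in> carrier_vec n \<Longrightarrow> q *\<^sub>v x = x \<Longrightarrow> B *\<^sub>v x = x"
  shows "mat_le n q B"
proof -
  have qc: "q \<in> carrier_mat n n" and qq: "q * q = q" and hq: "cadj q = q"
    using q by (auto simp: is_projection_def)
  have Bc: "B \<in> carrier_mat n n" using B by (simp add: psd_def)
  have herm: "cadj (B - q) = B - q" using cadj_minus[OF Bc qc] psd_hermitian[OF B] hq by simp
  \<comment> \<open>\<open>B - q\<close> vanishes on the range of \<open>q\<close>, so its form at \<open>y\<close> only sees the part \<open>z\<close> of \<open>y\<close>
    in the kernel of \<open>q\<close>, where it is the form of \<open>B\<close>\<close>
  have "0 \<le> qform (B - q) y" if y: "y \<in> carrier_vec n" for y
  proof -
    define x where "x = q *\<^sub>v y"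
    define z where "z = y - x"
    have x: "x \<in> carrier_vec n" and z: "z \<in> carrier_vec n" using qc y by (auto simp: x_def z_def)
    have yxz: "y = x + z" using x y by (intro eq_vecI) (auto simp: z_def)
    have "q *\<^sub>v x = (q * q) *\<^sub>v y" using qc y by (simp add: x_def)
    then have qx: "q *\<^sub>v x = x" by (simp add: qq x_def)
    have qz: "q *\<^sub>v z = 0\<^sub>v n" using qx qc x y by (simp add: z_def mult_minus_distrib_mat_vec x_def)
    have Nx: "(B - q) *\<^sub>v x = 0\<^sub>v n"
      using fixed[OF x qx] qx Bc qc x by (simp add: minus_mult_distrib_mat_vec)
    have "((B - q) *\<^sub>v z) \<bullet>c x = 0"
      using cscalar_prod_adjoint[of "B - q" n n z x] herm Nx Bc qc z x by simp
    then have "qform (B - q) y = qform (B - q) z"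
      using qform_add_vec[of "B - q" n x z] Nx Bc qc x z by (simp add: yxz qform_cscalar_prod)
    also have "\<dots> = qform B z"
      using qform_minus_mat[OF Bc qc z] qz z by (simp add: qform_cscalar_prod)
    finally show ?thesis using B z by (simp add: psd_iff_qform_nonneg)
  qed
  then show ?thesis using qc Bc by (simp add: mat_le_def psd_iff_qform_nonneg)
qed

lemma projection_fixed_vector:
  assumes q: "is_projection n q" and q0: "q \<noteq> 0\<^sub>m n n"
  obtains x where "x \<in> carrier_vec n" "x \<noteq> 0\<^sub>v n" "q *\<^sub>v x = x"
proof -
  have qc: "q \<in> carrier_mat n n" and qq: "q * q = q" using q by (auto simp: is_projection_def)
  have "\<exists>i j. i < n \<and> j < n \<and> q $$ (i, j) \<noteq> 0"
  proof (rule ccontr)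
    assume "\<not> ?thesis"
    then have "q = 0\<^sub>m n n" using qc by (intro eq_matI) auto
    with q0 show False ..
  qed
  then obtain i j where ij: "i < n" "j < n" "q $$ (i, j) \<noteq> 0" by blast
  show ?thesis
  proof (rule that)
    show "col q j \<in> carrier_vec n" using carrier_matD(1)[OF qc] by (intro carrier_vecI) simp
    show "col q j \<noteq> 0\<^sub>v n" using ij qc by (auto simp: vec_eq_iff)
    show "q *\<^sub>v col q j = col q j" using col_mult2[OF qc qc ij(2)] qq by simp
  qed
qed

lemma eigenvector_in_range:
  assumes A: "A \<in> carrier_mat n n" and q: "q \<in> carrier_mat n n" and Aq: "A * q = c \<cdot>\<^sub>m q"
    and x: "x \<in> carrier_vec n" and qx: "q *\<^sub>v x = x"
  shows "A *\<^sub>v x = c \<cdot>\<^sub>v x"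
proof -
  have "A *\<^sub>v x = (A * q) *\<^sub>v x" using A q x qx by simp
  then show ?thesis using q x qx by (simp add: Aq smult_mult_mat_vec)
qed

lemma pd_eigenvalue_pos:
  assumes A: "pd n A" and x: "x \<in> carrier_vec n" "x \<noteq> 0\<^sub>v n"
    and Ax: "A *\<^sub>v x = complex_of_real \<mu> \<cdot>\<^sub>v x"
  shows "0 < \<mu>"
proof -
  have "qform A x = complex_of_real \<mu> * (x \<bullet>c x)" using x Ax by (simp add: qform_cscalar_prod)
  moreover have "0 < Re (qform A x)" using A x by (simp add: pd_def)
  moreover have "0 < Re (x \<bullet>c x)" using x by (simp add: less_complex_def flip: conjugate_square_greater_0_vec)
  ultimately show ?thesis by (simp add: zero_less_mult_iff)
qed

lemma pd_eigenvalue_on_projection_pos: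
  assumes A: "pd n A" and q: "is_projection n q" "q \<noteq> 0\<^sub>m n n"
    and Aq: "A * q = complex_of_real \<mu> \<cdot>\<^sub>m q"
  shows "0 < \<mu>"
proof -
  obtain x where x: "x \<in> carrier_vec n" "x \<noteq> 0\<^sub>v n" and qx: "q *\<^sub>v x = x"
    using projection_fixed_vector[OF q] .
  have "A \<in> carrier_mat n n" "q \<in> carrier_mat n n"
    using A q by (auto simp: pd_def is_projection_def)
  from eigenvector_in_range[OF this Aq x(1) qx] show ?thesis by (rule pd_eigenvalue_pos[OF A x])
qed

section \<open>Spectral decomposition of Hermitian matrices\<close>

definition normalize_vec :: "complex vec \<Rightarrow> complex vec" where
  "normalize_vec v = complex_of_real (1 / sqrt (Re (v \<bullet>c v))) \<cdot>\<^sub>v v"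

lemma normalize_vec_carrier [simp]: "normalize_vec v \<in> carrier_vec n \<longleftrightarrow> v \<in> carrier_vec n"
  by (simp add: normalize_vec_def)

lemma cscalar_prod_normalize_vec:
  assumes v: "v \<in> carrier_vec n" and w: "w \<in> carrier_vec n"
  shows "normalize_vec v \<bullet>c normalize_vec w
    = complex_of_real (1 / sqrt (Re (v \<bullet>c v)) * (1 / sqrt (Re (w \<bullet>c w)))) * (v \<bullet>c w)"
  using v w by (simp add: normalize_vec_def conjugate_smult_vec)

lemma normalize_vec_unit:
  assumes v: "v \<in> carrier_vec n" and v0: "v \<noteq> 0\<^sub>v n"
  shows "normalize_vec v \<bullet>c normalize_vec v = 1"
proof -
  define r where "r = Re (v \<bullet>c v)"
  have "0 < v \<bullet>c v" using v v0 by simp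
  then have vv: "v \<bullet>c v = complex_of_real r" and r: "0 < r"
    by (auto simp: less_complex_def complex_eq_iff r_def)
  have "1 / sqrt r * (1 / sqrt r) * r = 1" using r by (simp add: field_simps)
  then show ?thesis
    unfolding cscalar_prod_normalize_vec[OF v v] vv r_def[symmetric] by (simp flip: of_real_mult)
qed

lemma normalize_vec_of_unit: "v \<bullet>c v = 1 \<Longrightarrow> normalize_vec v = v"
  by (simp add: normalize_vec_def)

lemma orthonormal_extension:
  assumes u: "(u :: complex vec) \<in> carrier_vec n" and u1: "u \<bullet>c u = 1"
  obtains us where "length us = n" "set us \<subseteq> carrier_vec n" "hd us = u"
    "\<And>i j. i < n \<Longrightarrow> j < n \<Longrightarrow> us ! i \<bullet>c us ! j = (if i = j then 1 else 0)"
proof -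
  have u0: "u \<noteq> 0\<^sub>v n" using u1 by auto
  then have n: "0 < n" using u by (cases n) (auto intro!: eq_vecI)
  interpret cof_vec_space n "TYPE(complex)" .
  define b where "b = basis_completion u"
  have b: "set b \<subseteq> carrier_vec n" "distinct b" "\<not> lin_dep (set b)" "length b = n" "hd b = u"
    using basis_completion[OF u u0] by (auto simp: b_def)
  define ws where "ws = gram_schmidt n b"
  have ws: "set ws \<subseteq> carrier_vec n" "corthogonal ws" "length ws = n"
    using gram_schmidt_result[OF b(1-3) ws_def] b(4) by auto
  have hd_ws: "hd ws = u"
    using b(4,5) n gram_schmidt_hd[OF u] by (cases b) (auto simp: ws_def)
  define us where "us = map normalize_vec ws"
  have orthonormal: "us ! i \<bullet>c us ! j = (if i = j then 1 else 0)" if "i < n" "j < n" for i j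
  proof (cases "i = j")
    case True
    have wi: "ws ! i \<in> carrier_vec n" using ws that by auto
    have "ws ! i \<noteq> 0\<^sub>v n" using corthogonalD[OF ws(2), of i i] ws that by auto
    then show ?thesis using True ws that normalize_vec_unit[OF wi] by (simp add: us_def)
  next
    case False
    have "ws ! i \<in> carrier_vec n" "ws ! j \<in> carrier_vec n" using ws that by auto
    then show ?thesis
      using False corthogonalD[OF ws(2), of i j] ws that by (simp add: us_def cscalar_prod_normalize_vec)
  qed
  have "hd us = u" using hd_ws n ws u1 by (cases ws) (auto simp: us_def normalize_vec_of_unit)
  moreover have "length us = n" "set us \<subseteq> carrier_vec n" using ws by (auto simp: us_def)
  ultimately show ?thesis using that orthonormal by blast
qed

definition unitary :: "nat \<Rightarrow> complex mat \<Rightarrow> bool" where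
  "unitary n U \<longleftrightarrow> U \<in> carrier_mat n n \<and> cadj U * U = 1\<^sub>m n"

lemma unitary_mult_cadj: "unitary n U \<Longrightarrow> U * cadj U = 1\<^sub>m n"
  unfolding unitary_def by (metis cadj_carrier mat_mult_left_right_inverse)

lemma unitary_similar:
  assumes U: "unitary n U" and A: "A \<in> carrier_mat n n"
  shows "similar_mat_wit (cadj U * A * U) A (cadj U) U"
  using U A unitary_mult_cadj[OF U]
  by (intro similar_mat_witI[of _ _ n]) (auto simp: unitary_def)

lemma unitary_mat_of_cols:
  assumes len: "length us = n" and us: "set us \<subseteq> carrier_vec n"
    and orthonormal: "\<And>i j. i < n \<Longrightarrow> j < n \<Longrightarrow> us ! i \<bullet>c us ! j = (if i = j then 1 else 0)"
  shows "unitary n (mat_of_cols n us)"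
proof -
  let ?W = "mat_of_cols n us"
  have W: "?W \<in> carrier_mat n n" using mat_of_cols_carrier(1)[of n us] len by simp
  have "cadj ?W * ?W = 1\<^sub>m n"
  proof (rule eq_matI)
    fix i j assume "i < dim_row (1\<^sub>m n)" "j < dim_col (1\<^sub>m n)"
    then have i: "i < n" and j: "j < n" by auto
    have "us ! i \<in> carrier_vec n" "us ! j \<in> carrier_vec n" using us len i j by auto
    then have "(cadj ?W * ?W) $$ (i, j) = us ! j \<bullet>c us ! i"
      using i j W len by (auto simp: scalar_prod_def mat_of_cols_index mult.commute intro!: sum.cong)
    then show "(cadj ?W * ?W) $$ (i, j) = 1\<^sub>m n $$ (i, j)" using orthonormal[OF j i] i j by simp
  qed (use W in auto)
  then show ?thesis using W by (simp add: unitary_def)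
qed

lemma unitary_completion:
  assumes u: "(u :: complex vec) \<in> carrier_vec n" and u1: "u \<bullet>c u = 1"
  obtains W where "unitary n W" "col W 0 = u"
proof -
  obtain us where us: "length us = n" "set us \<subseteq> carrier_vec n" "hd us = u"
    and orthonormal: "\<And>i j. i < n \<Longrightarrow> j < n \<Longrightarrow> us ! i \<bullet>c us ! j = (if i = j then 1 else 0)"
    using orthonormal_extension[OF u u1] by blast
  have "u \<noteq> 0\<^sub>v n" using u1 by auto
  then have "0 < n" using u by (cases n) (auto intro!: eq_vecI)
  then have "col (mat_of_cols n us) 0 = u" using us by (cases us) auto
  then show ?thesis using that unitary_mat_of_cols[OF us(1,2) orthonormal] by blast
qed

lemma unit_eigenvector_exists:
  assumes A: "(A :: complex mat) \<in> carrier_mat n n" and n: "0 < n"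
  obtains e u where "u \<in> carrier_vec n" "u \<bullet>c u = 1" "A *\<^sub>v u = e \<cdot>\<^sub>v u"
proof -
  obtain e where "eigenvalue A e" using spectrum_non_empty[OF A n] by (auto simp: spectrum_def)
  then obtain v where v: "v \<in> carrier_vec n" "v \<noteq> 0\<^sub>v n" and Av: "A *\<^sub>v v = e \<cdot>\<^sub>v v"
    using A by (auto simp: eigenvalue_def eigenvector_def)
  have "A *\<^sub>v normalize_vec v = e \<cdot>\<^sub>v normalize_vec v"
    using A v Av by (simp add: normalize_vec_def mult_mat_vec smult_smult_assoc mult.commute)
  then show ?thesis using that[of "normalize_vec v" e] v normalize_vec_unit[OF v] by simp
qed

lemma hermitian_first_column_block:
  assumes Bc: "B \<in> carrier_mat (Suc m) (Suc m)" and hB: "cadj B = B"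
    and col0: "\<And>i. i < Suc m \<Longrightarrow> B $$ (i, 0) = (if i = 0 then e else 0)"
  defines "C \<equiv> mat m m (\<lambda>(i, j). B $$ (Suc i, Suc j))"
  shows "B = four_block_mat (mat 1 1 (\<lambda>_. complex_of_real (Re e))) (0\<^sub>m 1 m) (0\<^sub>m m 1) C"
    and "cadj C = C"
proof -
  have herm: "B $$ (k, l) = cnj (B $$ (l, k))" if "k < Suc m" "l < Suc m" for k l
  proof -
    have "cadj B $$ (k, l) = cnj (B $$ (l, k))" using Bc that by simp
    then show ?thesis unfolding hB .
  qed
  have B00: "B $$ (0, 0) = e" using col0[of 0] by simp
  have "cnj e = e" using herm[OF zero_less_Suc zero_less_Suc] unfolding B00 by (rule sym)
  then have e_real: "complex_of_real (Re e) = e" by (simp add: complex_eq_iff)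
  have row0: "B $$ (0, j) = (if j = 0 then e else 0)" if "j < Suc m" for j
  proof -
    have "B $$ (0, j) = cnj (B $$ (j, 0))" by (rule herm) (use that in auto)
    also have "\<dots> = (if j = 0 then e else 0)" using col0[OF that] e_real by (auto simp: complex_eq_iff)
    finally show ?thesis .
  qed
  show "B = four_block_mat (mat 1 1 (\<lambda>_. complex_of_real (Re e))) (0\<^sub>m 1 m) (0\<^sub>m m 1) C"
    using Bc col0 row0 e_real by (intro eq_matI) (auto simp: C_def)
  show "cadj C = C"
  proof (rule eq_matI)
    fix i j assume "i < dim_row C" "j < dim_col C"
    then show "cadj C $$ (i, j) = C $$ (i, j)" using herm[of "Suc i" "Suc j"] by (simp add: C_def)
  qed (simp_all add: C_def)
qed

lemma hermitian_deflation:
  assumes A: "A \<in> carrier_mat (Suc m) (Suc m)" and hA: "cadj A = A"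
  obtains W e C where "unitary (Suc m) W" "C \<in> carrier_mat m m" "cadj C = C"
    "cadj W * A * W = four_block_mat (mat 1 1 (\<lambda>_. complex_of_real e)) (0\<^sub>m 1 m) (0\<^sub>m m 1) C"
proof -
  let ?n = "Suc m"
  obtain e u where u: "u \<in> carrier_vec ?n" "u \<bullet>c u = 1" and Au: "A *\<^sub>v u = e \<cdot>\<^sub>v u"
    using unit_eigenvector_exists[OF A] by blast
  obtain W where W: "unitary ?n W" and W0: "col W 0 = u" using unitary_completion[OF u] by blast
  have Wc: "W \<in> carrier_mat ?n ?n" and WW: "cadj W * W = 1\<^sub>m ?n" using W by (auto simp: unitary_def)
  have cWc: "cadj W \<in> carrier_mat ?n ?n" using cadj_carrier[OF Wc] .
  define B where "B = cadj W * A * W"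
  have Bc: "B \<in> carrier_mat ?n ?n" unfolding B_def using cWc A Wc by (intro mult_carrier_mat)
  have "cadj (cadj W * A * cadj (cadj W)) = cadj W * cadj A * cadj (cadj W)"
    by (rule cadj_congruence[OF cWc A])
  then have hB: "cadj B = B" using hA by (simp add: B_def)
  have col0: "B $$ (i, 0) = (if i = 0 then e else 0)" if i: "i < ?n" for i
  proof -
    have "col (A * W) 0 = e \<cdot>\<^sub>v col W 0" using col_mult2[OF A Wc, of 0] W0 Au by simp
    then have "B $$ (i, 0) = row (cadj W) i \<bullet> (e \<cdot>\<^sub>v col W 0)"
      using i A Wc by (simp add: B_def assoc_mult_mat[OF cWc A Wc])
    also have "\<dots> = e * (cadj W * W) $$ (i, 0)" using i Wc by simp
    finally show ?thesis using WW i by simp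
  qed
  note blocks = hermitian_first_column_block[OF Bc hB col0]
  have "mat m m (\<lambda>(i, j). B $$ (Suc i, Suc j)) \<in> carrier_mat m m" by simp
  from that[OF W this blocks(2)] blocks(1) show ?thesis by (simp add: B_def)
qed

theorem hermitian_unitarily_similar_diagonal:
  assumes "A \<in> carrier_mat n n" "cadj A = A"
  shows "\<exists>U d. similar_mat_wit A (mat_diag n (\<lambda>i. complex_of_real (d i))) U (cadj U)"
  using assms
proof (induction n arbitrary: A)
  case 0
  then have "similar_mat_wit A (mat_diag 0 (\<lambda>i. complex_of_real 0)) (1\<^sub>m 0) (cadj (1\<^sub>m 0))"
    by (intro similar_mat_witI[of _ _ 0]) (auto intro!: eq_matI)
  then show ?case by (intro exI[of _ "1\<^sub>m 0"] exI[of _ "\<lambda>_. 0"])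
next
  case (Suc m)
  obtain W e C where W: "unitary (Suc m) W" and Cc: "C \<in> carrier_mat m m" and hC: "cadj C = C"
    and blocks: "cadj W * A * W = four_block_mat (mat 1 1 (\<lambda>_. complex_of_real e)) (0\<^sub>m 1 m) (0\<^sub>m m 1) C"
    using hermitian_deflation[OF Suc.prems] .
  obtain V d where simC: "similar_mat_wit C (mat_diag m (\<lambda>i. complex_of_real (d i))) V (cadj V)"
    using Suc.IH[OF Cc hC] by blast
  have Vc: "V \<in> carrier_mat m m" using similar_mat_witD2[OF Cc simC] by simp
  have Wc: "W \<in> carrier_mat (Suc m) (Suc m)" using W by (simp add: unitary_def)
  define E where "E = mat 1 1 (\<lambda>_. complex_of_real e)"
  define d' where "d' i = (if i = 0 then e else d (i - 1))" for i
  define P where "P = four_block_mat (1\<^sub>m 1) (0\<^sub>m 1 m) (0\<^sub>m m 1) V"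
  have Pc: "P \<in> carrier_mat (Suc m) (Suc m)"
    unfolding P_def using four_block_carrier_mat[OF one_carrier_mat[of 1] Vc] by simp
  have "similar_mat_wit (four_block_mat E (0\<^sub>m 1 m) (0\<^sub>m m 1) C)
      (four_block_mat E (0\<^sub>m 1 m) (0\<^sub>m m 1) (mat_diag m (\<lambda>i. complex_of_real (d i))))
      P (four_block_mat (1\<^sub>m 1) (0\<^sub>m 1 m) (0\<^sub>m m 1) (cadj V))"
    unfolding P_def
    by (rule similar_mat_wit_four_block[OF similar_mat_wit_refl simC]) (use Cc Vc in \<open>auto simp: E_def\<close>)
  moreover have "four_block_mat E (0\<^sub>m 1 m) (0\<^sub>m m 1) (mat_diag m (\<lambda>i. complex_of_real (d i)))
      = mat_diag (Suc m) (\<lambda>i. complex_of_real (d' i))"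
    by (intro eq_matI) (auto simp: E_def mat_diag_def d'_def)
  moreover have "four_block_mat (1\<^sub>m 1) (0\<^sub>m 1 m) (0\<^sub>m m 1) (cadj V) = cadj P"
    using Vc by (simp add: P_def cadj_four_block_mat[of _ 1 1 _ m _ m])
  ultimately have "similar_mat_wit (cadj W * A * W) (mat_diag (Suc m) (\<lambda>i. complex_of_real (d' i))) P (cadj P)"
    by (simp add: blocks E_def)
  from similar_mat_wit_trans[OF similar_mat_wit_sym[OF unitary_similar[OF W Suc.prems(1)]] this]
  have "similar_mat_wit A (mat_diag (Suc m) (\<lambda>i. complex_of_real (d' i))) (W * P) (cadj (W * P))"
    unfolding cadj_mult[OF Wc Pc] .
  then show ?case by blast
qed

lemma similarity_mult:
  assumes U: "(U :: 'a :: semiring_1 mat) \<in> carrier_mat n n" and V: "V \<in> carrier_mat n n" and VU: "V * U = 1\<^sub>m n"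
    and X: "X \<in> carrier_mat n n" and Y: "Y \<in> carrier_mat n n"
  shows "U * X * V * (U * Y * V) = U * (X * Y) * V"
proof -
  have "U * X * V * (U * Y * V) = U * X * (V * U) * (Y * V)"
    using U V X Y by (simp add: assoc_mult_mat[of _ n n _ n _ n])
  also have "\<dots> = U * (X * Y) * V" using U V X Y by (simp add: VU assoc_mult_mat[of _ n n _ n _ n])
  finally show ?thesis .
qed

lemma similarity_cancel:
  assumes "(U :: 'a :: semiring_1 mat) \<in> carrier_mat n n" "V \<in> carrier_mat n n" "V * U = 1\<^sub>m n"
    "X \<in> carrier_mat n n"
  shows "V * (U * X * V) * U = X"
proof -
  have "V * (U * X * V) * U = (V * U) * X * (V * U)"
    using assms(1,2,4) by (simp add: assoc_mult_mat[of _ n n _ n _ n])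
  then show ?thesis using assms by simp
qed

lemma similarity_diff:
  assumes U: "(U :: 'a :: ring mat) \<in> carrier_mat n n" and V: "V \<in> carrier_mat n n"
    and X: "X \<in> carrier_mat n n" and Y: "Y \<in> carrier_mat n n"
  shows "U * X * V - U * Y * V = U * (X - Y) * V"
proof -
  have "U * (X - Y) = U * X - U * Y" by (rule mult_minus_distrib_mat[OF U X Y])
  then have "U * (X - Y) * V = (U * X - U * Y) * V" by simp
  also have "\<dots> = U * X * V - U * Y * V"
    by (rule minus_mult_distrib_mat[OF mult_carrier_mat[OF U X] mult_carrier_mat[OF U Y] V])
  finally show ?thesis by simp
qed

lemma similarity_smult:
  assumes "(U :: 'a :: comm_ring mat) \<in> carrier_mat n n" "V \<in> carrier_mat n n" "X \<in> carrier_mat n n"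
  shows "c \<cdot>\<^sub>m (U * X * V) = U * (c \<cdot>\<^sub>m X) * V"
  using assms by (simp add: mult_smult_distrib[of U n n] mult_smult_assoc_mat[of _ n n V])

text \<open>
  \<open>diag_conj U n f\<close> acts as multiplication by \<open>f i\<close> on the \<open>i\<close>-th column of \<open>U\<close>. For unitary \<open>U\<close>,
  \<open>f \<mapsto> diag_conj U n f\<close> is a homomorphism of \<open>*\<close>-algebras, so for \<open>A = diag_conj U n d\<close> the
  spectral projection of \<open>A\<close> for an eigenvalue \<open>\<lambda>\<close> is \<open>diag_conj U n (\<lambda>i. if d i = \<lambda> then 1 else 0)\<close>.
\<close>

definition diag_conj :: "complex mat \<Rightarrow> nat \<Rightarrow> (nat \<Rightarrow> real) \<Rightarrow> complex mat" where
  "diag_conj U n f = U * mat_diag n (\<lambda>i. complex_of_real (f i)) * cadj U"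

corollary hermitian_diagonalization:
  assumes A: "A \<in> carrier_mat n n" and hA: "cadj A = A"
  obtains U d where "unitary n U" "A = diag_conj U n d"
proof -
  obtain U d where "similar_mat_wit A (mat_diag n (\<lambda>i. complex_of_real (d i))) U (cadj U)"
    using hermitian_unitarily_similar_diagonal[OF A hA] by blast
  note wit = similar_mat_witD2[OF A this]
  have "unitary n U" using wit(2,6) by (simp add: unitary_def)
  moreover have "A = diag_conj U n d" using wit(3) by (simp only: diag_conj_def)
  ultimately show ?thesis by (rule that)
qed

context
  fixes U :: "complex mat" and n :: nat
  assumes U: "unitary n U"
begin

lemma unitary_carrier: "U \<in> carrier_mat n n" "cadj U \<in> carrier_mat n n"
  using U cadj_carrier by (auto simp: unitary_def)

lemma unitary_cadj_mult: "cadj U * U = 1\<^sub>m n"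
  using U by (simp add: unitary_def)

lemma diag_conj_carrier: "diag_conj U n f \<in> carrier_mat n n"
  unfolding diag_conj_def
  using mult_carrier_mat[OF mult_carrier_mat[OF unitary_carrier(1) mat_diag_dim] unitary_carrier(2)] .

lemma diag_conj_mult: "diag_conj U n f * diag_conj U n g = diag_conj U n (\<lambda>i. f i * g i)"
  using similarity_mult[OF unitary_carrier unitary_cadj_mult mat_diag_dim mat_diag_dim]
  by (simp add: diag_conj_def)

lemma diag_conj_diff: "diag_conj U n f - diag_conj U n g = diag_conj U n (\<lambda>i. f i - g i)"
proof -
  have "mat_diag n (\<lambda>i. complex_of_real (f i)) - mat_diag n (\<lambda>i. complex_of_real (g i))
      = mat_diag n (\<lambda>i. complex_of_real (f i - g i))"
    by (intro eq_matI) (auto simp: mat_diag_def)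
  then show ?thesis
    using similarity_diff[OF unitary_carrier mat_diag_dim mat_diag_dim] by (simp add: diag_conj_def)
qed

lemma diag_conj_smult: "complex_of_real c \<cdot>\<^sub>m diag_conj U n f = diag_conj U n (\<lambda>i. c * f i)"
proof -
  have "complex_of_real c \<cdot>\<^sub>m mat_diag n (\<lambda>i. complex_of_real (f i))
      = mat_diag n (\<lambda>i. complex_of_real (c * f i))"
    by (intro eq_matI) (auto simp: mat_diag_def)
  then show ?thesis
    using similarity_smult[OF unitary_carrier mat_diag_dim] by (simp add: diag_conj_def)
qed

lemma diag_conj_one: "diag_conj U n (\<lambda>_. 1) = 1\<^sub>m n"
  using unitary_mult_cadj[OF U] unitary_carrier by (simp add: diag_conj_def)

lemma cadj_diag_conj: "cadj (diag_conj U n f) = diag_conj U n f"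
  using cadj_congruence[OF unitary_carrier(1) mat_diag_dim] by (simp add: diag_conj_def)

lemma psd_diag_conj: "(\<And>i. i < n \<Longrightarrow> 0 \<le> f i) \<Longrightarrow> psd n (diag_conj U n f)"
  unfolding diag_conj_def by (rule psd_congruence[OF psd_mat_diag_real unitary_carrier(1)])

lemma diag_conj_eq_zeroD:
  assumes zero: "diag_conj U n f = 0\<^sub>m n n" and i: "i < n"
  shows "f i = 0"
proof -
  have "mat_diag n (\<lambda>i. complex_of_real (f i)) = cadj U * diag_conj U n f * U"
    using similarity_cancel[OF unitary_carrier unitary_cadj_mult mat_diag_dim]
    by (simp add: diag_conj_def)
  also have "\<dots> = 0\<^sub>m n n" using unitary_carrier by (simp add: zero)
  finally have "mat_diag n (\<lambda>i. complex_of_real (f i)) $$ (i, i) = 0" using i by simp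
  then show ?thesis using i by (simp add: mat_diag_def)
qed

end

lemma top_eigenprojection:
  assumes A: "A \<in> carrier_mat n n" and hA: "cadj A = A" and n: "0 < n"
  obtains \<mu> c q where "is_projection n q" "q \<noteq> 0\<^sub>m n n" "0 < c"
    "A * q = complex_of_real \<mu> \<cdot>\<^sub>m q"
    "psd n (complex_of_real \<mu> \<cdot>\<^sub>m 1\<^sub>m n - A - complex_of_real c \<cdot>\<^sub>m (1\<^sub>m n - q))"
proof -
  obtain U d where U: "unitary n U" and A_eq: "A = diag_conj U n d"
    using hermitian_diagonalization[OF A hA] .
  define \<mu> where "\<mu> = Max (d ` {..<n})"
  have d_le: "d i \<le> \<mu>" if "i < n" for i using that by (simp add: \<mu>_def)
  have "\<mu> \<in> d ` {..<n}" unfolding \<mu>_def using n by (intro Max_in) auto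
  then obtain i0 where i0: "i0 < n" "d i0 = \<mu>" by auto
  define e where "e i = (if d i = \<mu> then 1 else 0 :: real)" for i
  \<comment> \<open>the gap between \<open>\<mu>\<close> and the other eigenvalues, or \<open>1\<close> if there are none\<close>
  define c where "c = Min (insert 1 ((\<lambda>i. \<mu> - d i) ` {i. i < n \<and> d i \<noteq> \<mu>}))"
  have c: "0 < c" unfolding c_def using d_le by (subst Min_gr_iff) (auto simp: less_le)
  have gap: "c * (1 - e i) \<le> \<mu> - d i" if "i < n" for i
  proof (cases "d i = \<mu>")
    case False
    then have "c \<le> \<mu> - d i" using that by (simp add: c_def)
    then show ?thesis using False by (simp add: e_def)
  qed (simp add: e_def)
  define q where "q = diag_conj U n e"
  have "(\<lambda>i. e i * e i) = e" by (auto simp: e_def)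
  then have "q * q = q" by (simp add: q_def diag_conj_mult[OF U])
  then have "is_projection n q"
    using diag_conj_carrier[OF U] cadj_diag_conj[OF U] by (simp add: is_projection_def q_def)
  moreover have "q \<noteq> 0\<^sub>m n n" using diag_conj_eq_zeroD[OF U _ i0(1), of e] i0(2) by (auto simp: q_def e_def)
  moreover have "A * q = complex_of_real \<mu> \<cdot>\<^sub>m q"
  proof -
    have "(\<lambda>i. d i * e i) = (\<lambda>i. \<mu> * e i)" by (auto simp: e_def)
    then show ?thesis by (simp add: A_eq q_def diag_conj_mult[OF U] diag_conj_smult[OF U])
  qed
  moreover have "psd n (complex_of_real \<mu> \<cdot>\<^sub>m 1\<^sub>m n - A - complex_of_real c \<cdot>\<^sub>m (1\<^sub>m n - q))"
    unfolding A_eq diag_conj_one[OF U, symmetric] q_def diag_conj_diff[OF U] diag_conj_smult[OF U]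
      diag_conj_diff[OF U]
    using gap by (intro psd_diag_conj[OF U]) simp
  ultimately show ?thesis using c that by blast
qed

section \<open>Positive maps\<close>

lemma completely_positive_imp_positive:
  assumes cp: "completely_positive s f" and X: "psd s X"
  shows "psd s (f X)"
proof -
  have Xc: "X \<in> carrier_mat s s" using X by (simp add: psd_def)
  have fX: "f X \<in> carrier_mat s s" using cp Xc by (simp add: completely_positive_def lin_map_def)
  have "\<forall>k X. psd (k * s) X \<longrightarrow> psd (k * s) (ampl s k f X)"
    using cp by (simp add: completely_positive_def)
  then have "psd s (ampl s 1 f X)" using X by (metis mult_1)
  moreover have "ampl s 1 f X = f X"
  proof -
    have "blk s X 0 0 = X" using Xc by (intro eq_matI) (auto simp: blk_def)
    then show ?thesis using fX by (intro eq_matI) (auto simp: ampl_def)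
  qed
  ultimately show ?thesis by simp
qed

lemma lin_map_diff:
  assumes L: "lin_map s f" and A: "A \<in> carrier_mat s s" and B: "B \<in> carrier_mat s s"
  shows "f (A - B) = f A - f B"
proof -
  have "A - B = A + (-1) \<cdot>\<^sub>m B" using A B by (intro eq_matI) auto
  then have "f (A - B) = f A + (-1) \<cdot>\<^sub>m f B" using L A B by (simp add: lin_map_def)
  also have "\<dots> = f A - f B" using L A B by (intro eq_matI) (auto simp: lin_map_def)
  finally show ?thesis .
qed

lemma lin_map_unital_if_fixes_scalar:
  assumes lin: "lin_map n \<alpha>" and fixed: "\<alpha> (c \<cdot>\<^sub>m 1\<^sub>m n) = c \<cdot>\<^sub>m 1\<^sub>m n" and c: "c \<noteq> 0"
  shows "\<alpha> (1\<^sub>m n) = 1\<^sub>m n"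
proof -
  have "c \<cdot>\<^sub>m \<alpha> (1\<^sub>m n) = c \<cdot>\<^sub>m 1\<^sub>m n" using lin fixed by (simp add: lin_map_def)
  then show ?thesis by (rule smult_mat_cancel[OF c])
qed

context
  fixes \<alpha> :: "complex mat \<Rightarrow> complex mat" and n :: nat
  assumes lin: "lin_map n \<alpha>" and pos: "\<And>X. psd n X \<Longrightarrow> psd n (\<alpha> X)"
    and sub: "mat_le n (\<alpha> (1\<^sub>m n)) (1\<^sub>m n)"
begin

lemma positive_map_carrier: "A \<in> carrier_mat n n \<Longrightarrow> \<alpha> A \<in> carrier_mat n n"
  using lin by (simp add: lin_map_def)

lemma positive_map_fixes_top_eigenvector:
  assumes v: "v \<in> carrier_mat n n" "\<alpha> v = v" and top: "psd n (complex_of_real \<mu> \<cdot>\<^sub>m 1\<^sub>m n - v)"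
    and \<mu>: "0 < \<mu>" and x: "x \<in> carrier_vec n" and vx: "v *\<^sub>v x = complex_of_real \<mu> \<cdot>\<^sub>v x"
  shows "\<alpha> (1\<^sub>m n) *\<^sub>v x = x" and "qform (\<alpha> (complex_of_real \<mu> \<cdot>\<^sub>m 1\<^sub>m n - v)) x = 0"
proof -
  let ?I = "1\<^sub>m n"
  have I1: "\<alpha> ?I \<in> carrier_mat n n" by (simp add: positive_map_carrier)
  have defect: "psd n (?I - \<alpha> ?I)" using sub by (simp add: mat_le_def)
  have "\<alpha> (complex_of_real \<mu> \<cdot>\<^sub>m ?I - v) = complex_of_real \<mu> \<cdot>\<^sub>m \<alpha> ?I - v"
    using lin v by (simp add: lin_map_diff lin_map_def)
  moreover have "qform v x = complex_of_real \<mu> * qform ?I x" using vx x by (simp add: qform_cscalar_prod)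
  ultimately have "qform (\<alpha> (complex_of_real \<mu> \<cdot>\<^sub>m ?I - v)) x
      = - (complex_of_real \<mu> * qform (?I - \<alpha> ?I) x)"
    using I1 v x by (simp add: qform_minus_mat[of _ n] qform_smult_mat[of _ n] algebra_simps)
  moreover have "0 \<le> qform (\<alpha> (complex_of_real \<mu> \<cdot>\<^sub>m ?I - v)) x"
    using pos[OF top] x by (simp add: psd_iff_qform_nonneg)
  moreover have "0 \<le> qform (?I - \<alpha> ?I) x" using defect x by (simp add: psd_iff_qform_nonneg)
  ultimately have zero: "qform (?I - \<alpha> ?I) x = 0"
    using nonneg_eq_neg_scaled_imp_zero \<mu> by blast
  then show "qform (\<alpha> (complex_of_real \<mu> \<cdot>\<^sub>m ?I - v)) x = 0"
    using \<open>qform (\<alpha> _) x = - _\<close> by simp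
  have "(?I - \<alpha> ?I) *\<^sub>v x = 0\<^sub>v n" by (rule psd_qform_zero_imp_kernel[OF defect x zero])
  then show "\<alpha> ?I *\<^sub>v x = x"
    using I1 x by (simp add: minus_mult_distrib_mat_vec[OF one_carrier_mat I1 x] minus_vec_eq_zero_iff)
qed

lemma top_eigenprojection_le_image:
  assumes v: "v \<in> carrier_mat n n" "\<alpha> v = v"
    and q: "is_projection n q" and eig: "v * q = complex_of_real \<mu> \<cdot>\<^sub>m q"
    and gap: "psd n (complex_of_real \<mu> \<cdot>\<^sub>m 1\<^sub>m n - v - complex_of_real c \<cdot>\<^sub>m (1\<^sub>m n - q))"
    and \<mu>: "0 < \<mu>" and c: "0 < c"
  shows "mat_le n q (\<alpha> q)"
proof (rule projection_le_if_fixes_range[OF q pos[OF projection_psd[OF q]]])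
  let ?I = "1\<^sub>m n" and ?P = "complex_of_real \<mu> \<cdot>\<^sub>m 1\<^sub>m n - v"
  have qc: "q \<in> carrier_mat n n" using q by (simp add: is_projection_def)
  have co: "psd n (?I - q)" using projection_psd[OF projection_complement[OF q]] .
  have top: "psd n ?P" using psd_if_psd_diff[OF gap psd_smult[OF co]] c v by simp
  fix x assume x: "x \<in> carrier_vec n" and qx: "q *\<^sub>v x = x"
  note fixes_one = positive_map_fixes_top_eigenvector[OF v top \<mu> x
      eigenvector_in_range[OF v(1) qc eig x qx]]
  have "\<alpha> (?P - complex_of_real c \<cdot>\<^sub>m (?I - q)) = \<alpha> ?P - complex_of_real c \<cdot>\<^sub>m \<alpha> (?I - q)"
    using lin v qc by (simp add: lin_map_diff lin_map_def)
  then have "qform (\<alpha> (?P - complex_of_real c \<cdot>\<^sub>m (?I - q))) x = - (complex_of_real c * qform (\<alpha> (?I - q)) x)"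
    using fixes_one(2) x v qc by (simp add: qform_minus_mat[of _ n] qform_smult_mat[of _ n] positive_map_carrier)
  moreover have "0 \<le> qform (\<alpha> (?P - complex_of_real c \<cdot>\<^sub>m (?I - q))) x"
    using pos[OF gap] x by (simp add: psd_iff_qform_nonneg)
  moreover have "0 \<le> qform (\<alpha> (?I - q)) x" using pos[OF co] x by (simp add: psd_iff_qform_nonneg)
  ultimately have "qform (\<alpha> (?I - q)) x = 0" using nonneg_eq_neg_scaled_imp_zero c by blast
  then have "\<alpha> (?I - q) *\<^sub>v x = 0\<^sub>v n" by (rule psd_qform_zero_imp_kernel[OF pos[OF co] x])
  then have "\<alpha> ?I *\<^sub>v x - \<alpha> q *\<^sub>v x = 0\<^sub>v n"
    using lin_map_diff[OF lin one_carrier_mat qc] x qc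
    by (simp add: minus_mult_distrib_mat_vec[of _ n n] positive_map_carrier)
  moreover have "\<alpha> q *\<^sub>v x \<in> carrier_vec n" using positive_map_carrier[OF qc] x by simp
  ultimately show "\<alpha> q *\<^sub>v x = x" using fixes_one(1) x by (simp add: minus_vec_eq_zero_iff)
qed

end

theorem proposition9p12:
  fixes s :: nat and \<alpha> :: "complex mat \<Rightarrow> complex mat"
  assumes cp: "completely_positive s \<alpha>"
    and sub: "mat_le s (\<alpha> (1\<^sub>m s)) (1\<^sub>m s)"
    and no_proj: "\<not> (\<exists>p. is_projection s p \<and>
                      mat_le s (0\<^sub>m s s) p \<and> p \<noteq> 0\<^sub>m s s \<and>
                      mat_le s p (1\<^sub>m s) \<and> p \<noteq> 1\<^sub>m s \<and>
                      mat_le s p (\<alpha> p))"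
    and stab: "\<exists>n. (\<alpha> ^^ (n+1)) (1\<^sub>m s) = (\<alpha> ^^ n) (1\<^sub>m s) \<and> pd s ((\<alpha> ^^ n) (1\<^sub>m s))"
  shows "\<alpha> (1\<^sub>m s) = 1\<^sub>m s"
proof -
  have lin: "lin_map s \<alpha>" using cp by (simp add: completely_positive_def)
  note pos = completely_positive_imp_positive[OF cp]
  obtain k where fixed: "(\<alpha> ^^ (k + 1)) (1\<^sub>m s) = (\<alpha> ^^ k) (1\<^sub>m s)" and pd: "pd s ((\<alpha> ^^ k) (1\<^sub>m s))"
    using stab by blast
  define v where "v = (\<alpha> ^^ k) (1\<^sub>m s)"
  have pd: "pd s v" using pd by (simp add: v_def)
  have v: "v \<in> carrier_mat s s" "\<alpha> v = v"
    using pd fixed by (simp_all only: v_def pd_def Suc_eq_plus1[symmetric] funpow.simps(2) comp_apply)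
  show ?thesis
  proof (cases "s = 0")
    case True
    have "\<alpha> (1\<^sub>m s) \<in> carrier_mat s s" using lin by (simp add: lin_map_def)
    then show ?thesis using True by (intro eq_matI) auto
  next
    case False
    then have s: "0 < s" by simp
    obtain \<mu> c q where q: "is_projection s q" "q \<noteq> 0\<^sub>m s s" and c: "0 < c"
      and eig: "v * q = complex_of_real \<mu> \<cdot>\<^sub>m q"
      and gap: "psd s (complex_of_real \<mu> \<cdot>\<^sub>m 1\<^sub>m s - v - complex_of_real c \<cdot>\<^sub>m (1\<^sub>m s - q))"
      by (rule top_eigenprojection[OF v(1) psd_hermitian[OF pd_imp_psd[OF pd]] s])
    have \<mu>: "0 < \<mu>" by (rule pd_eigenvalue_on_projection_pos[OF pd q eig])
    have "mat_le s q (\<alpha> q)" by (rule top_eigenprojection_le_image[OF lin pos sub v q(1) eig gap \<mu> c])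
    then have "q = 1\<^sub>m s" using no_proj q projection_between_zero_one[OF q(1)] by blast
    then have "v = complex_of_real \<mu> \<cdot>\<^sub>m 1\<^sub>m s" using eig right_mult_one_mat[OF v(1)] by simp
    then have "\<alpha> (complex_of_real \<mu> \<cdot>\<^sub>m 1\<^sub>m s) = complex_of_real \<mu> \<cdot>\<^sub>m 1\<^sub>m s" using v(2) by simp
    then show ?thesis by (rule lin_map_unital_if_fixes_scalar[OF lin]) (use \<mu> in simp)
  qed
qed

end
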